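(* With the notation of the context, for every $\Gamma>0$ and all fixed frequencies, $$|B_\Gamma\cap S|\lesssim N_{\min}N_{\rm med};\qquad |B_\Gamma\cap S_k|,\ |B_\Gamma\cap S_{k_i}|\lesssim N_{\rm med}\ (i=1,2,3);\qquad |B_\Gamma\cap S_{kk_2}|,\ |B_\Gamma\cap S_{k_1k_3}|\lesssim N_{\rm med}.$$
   Context: Fix $\alpha\in(1,2)$, dyadic numbers $1\le N_1,N_2,N_3\le N$, a real number $m$ and a constant $C_0>0$. Let $S$ be the set of $(k,k_1,k_2,k_3)\in\mathbb Z^4$ with $k=k_1-k_2+k_3$, $k_2\notin\{k_1,k_3\}$, $\big||k_1|^\alpha-|k_2|^\alpha+|k_3|^\alpha-|k|^\alpha-m\big|\le C_0$, $|k|\le N$ and $|k_j|\le N_j$ for $j=1,2,3$. When some variables are fixed, $S$ with those variables as subscripts denotes the set of remaining variables for which the quadruple lies in $S$ (e.g. $S_{kk_2}=\{(k_1,k_3):(k,k_1,k_2,k_3)\in S\}$); intersections $B_\Gamma\cap S_{\cdots}$ are understood in the same sliced sense. $N_{\max}\ge N_{\rm med}\ge N_{\min}$ denote the decreasing rearrangement of $N_1,N_2,N_3$; fix an index $j_*$ with $N_{j_*}=N_{\max}$ and write $k_{\max}=k_{j_*}$. For $\Gamma>0$, $B_\Gamma=\{(k,k_1,k_2,k_3)\in S:|k_{\max}|\le\Gamma<|k|\}$. $|A|$ is cardinality. $A\lesssim B$ means $A\le CB$ with $C$ depending only on $\alpha$ and $C_0$. *)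

theory Defs
  imports Complex_Main
begin

definition dyadic :: "nat \<Rightarrow> bool" where
  "dyadic n \<longleftrightarrow> (\<exists>j::nat. n = 2 ^ j)"

definition nmax3 :: "nat \<Rightarrow> nat \<Rightarrow> nat \<Rightarrow> nat" where
  "nmax3 a b c = max a (max b c)"
definition nmin3 :: "nat \<Rightarrow> nat \<Rightarrow> nat \<Rightarrow> nat" where
  "nmin3 a b c = min a (min b c)"
definition nmed3 :: "nat \<Rightarrow> nat \<Rightarrow> nat \<Rightarrow> nat" where
  "nmed3 a b c = a + b + c - nmax3 a b c - nmin3 a b c"

definition sel3 :: "nat \<Rightarrow> 'a \<Rightarrow> 'a \<Rightarrow> 'a \<Rightarrow> 'a" where
  "sel3 j x1 x2 x3 = (if j = 1 then x1 else if j = 2 then x2 else x3)"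

definition Sset :: "real \<Rightarrow> real \<Rightarrow> real \<Rightarrow> nat \<Rightarrow> nat \<Rightarrow> nat \<Rightarrow> nat
    \<Rightarrow> (int \<times> int \<times> int \<times> int) set" where
  "Sset \<alpha> C0 m N N1 N2 N3 = {(k, k1, k2, k3).
     k = k1 - k2 + k3 \<and> k2 \<noteq> k1 \<and> k2 \<noteq> k3 \<and>
     \<bar>\<bar>real_of_int k1\<bar> powr \<alpha> - \<bar>real_of_int k2\<bar> powr \<alpha> + \<bar>real_of_int k3\<bar> powr \<alpha>
        - \<bar>real_of_int k\<bar> powr \<alpha> - m\<bar> \<le> C0 \<and>
     \<bar>k\<bar> \<le> int N \<and> \<bar>k1\<bar> \<le> int N1 \<and> \<bar>k2\<bar> \<le> int N2 \<and> \<bar>k3\<bar> \<le> int N3}"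

text \<open>B_Gamma, with k_max = k_j for the chosen index j.\<close>
definition Bset :: "real \<Rightarrow> real \<Rightarrow> real \<Rightarrow> nat \<Rightarrow> nat \<Rightarrow> nat \<Rightarrow> nat \<Rightarrow> nat \<Rightarrow> real
    \<Rightarrow> (int \<times> int \<times> int \<times> int) set" where
  "Bset \<alpha> C0 m N N1 N2 N3 j \<Gamma> = {(k, k1, k2, k3) \<in> Sset \<alpha> C0 m N N1 N2 N3.
     real_of_int \<bar>sel3 j k1 k2 k3\<bar> \<le> \<Gamma> \<and> \<Gamma> < real_of_int \<bar>k\<bar>}"

end

theory Submission
  imports Defs "HOL-Analysis.Convex"
begin

text \<open>
  Apart from \<open>k\<close> and \<open>k\<^sub>m\<^sub>a\<^sub>x\<close>, all frequencies in \<open>B\<^sub>\<Gamma>\<close> are at most \<open>N\<^sub>m\<^sub>e\<^sub>d\<close>, so the linear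
  relation puts \<open>\<bar>k\<^sub>m\<^sub>a\<^sub>x\<bar>\<close> and \<open>\<bar>k\<bar>\<close> into windows of width \<open>2 N\<^sub>m\<^sub>e\<^sub>d\<close> below and above \<open>\<Gamma>\<close>.
  The main step bounds the number of quadruples with one frequency fixed by \<open>O(N\<^sub>m\<^sub>e\<^sub>d)\<close>.

  If \<open>\<Gamma>\<close> is at most a constant times \<open>N\<^sub>m\<^sub>e\<^sub>d\<close>, all four frequencies are \<open>O(N\<^sub>m\<^sub>e\<^sub>d)\<close>. With one
  frequency fixed, the quadruple is determined by a pair \<open>(b, c)\<close>. For fixed \<open>e = b - c \<noteq> 0\<close> the
  resonance condition confines \<open>c \<mapsto> disp (c + e) - disp c\<close> to an interval of length \<open>2 C\<^sub>0\<close>,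
  while, as \<open>\<alpha> < 2\<close>, this map grows by at least a constant times \<open>\<bar>e\<bar> N\<^sub>m\<^sub>e\<^sub>d\<^sup>\<alpha>\<^sup>-\<^sup>2\<close> per step.
  So at most \<open>1 + O(N\<^sub>m\<^sub>e\<^sub>d\<^sup>2\<^sup>-\<^sup>\<alpha> / \<bar>e\<bar>)\<close> values of \<open>c\<close> remain, and summing over
  \<open>\<bar>e\<bar> = O(N\<^sub>m\<^sub>e\<^sub>d)\<close> gives \<open>O(N\<^sub>m\<^sub>e\<^sub>d)\<close>.

  If \<open>\<Gamma>\<close> is large, \<open>k\<close> and \<open>k\<^sub>m\<^sub>a\<^sub>x\<close> are both large. Fixing, besides the given frequency, a third
  one that takes only \<open>O(N\<^sub>m\<^sub>e\<^sub>d)\<close> values (a small frequency, or a large one in its window), the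
  remaining large and small frequencies move by equal amounts, and the large one moves the phase
  so much faster that each such fibre has \<open>O(1)\<close> points.

  Summing over the \<open>O(N\<^sub>m\<^sub>i\<^sub>n)\<close> values of the smallest frequency gives the bound for \<open>B\<^sub>\<Gamma>\<close>; when
  two frequencies are fixed, one of the remaining two determines the other.
\<close>

section \<open>Powers and the dispersion relation\<close>

definition disp :: "real \<Rightarrow> int \<Rightarrow> real" where
  "disp \<alpha> t = \<bar>real_of_int t\<bar> powr \<alpha>"

lemma disp_minus [simp]: "disp \<alpha> (- t) = disp \<alpha> t"
  by (simp add: disp_def)

lemma powr_tangent_convex:
  fixes \<alpha> u v :: real
  assumes "1 \<le> \<alpha>" "0 < u" "0 < v"
  shows "\<alpha> * v powr (\<alpha> - 1) * (u - v) \<le> u powr \<alpha> - v powr \<alpha>"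
proof -
  have "(\<lambda>x. \<alpha> * x powr (\<alpha> - 1)) v * (u - v) \<le> (\<lambda>x. x powr \<alpha>) u - (\<lambda>x. x powr \<alpha>) v"
  proof (rule f''_imp_f'[where C="{0<..}" and f''="\<lambda>x. \<alpha> * ((\<alpha> - 1) * x powr (\<alpha> - 1 - 1))"])
    show "DERIV (\<lambda>x. x powr \<alpha>) x :> \<alpha> * x powr (\<alpha> - 1)" if "x \<in> {0<..}" for x
      using that by (auto intro: has_real_derivative_powr)
    show "DERIV (\<lambda>x. \<alpha> * x powr (\<alpha> - 1)) x :> \<alpha> * ((\<alpha> - 1) * x powr (\<alpha> - 1 - 1))"
      if "x \<in> {0<..}" for x
      using that by (auto intro!: derivative_eq_intros has_real_derivative_powr)
    show "0 \<le> \<alpha> * ((\<alpha> - 1) * x powr (\<alpha> - 1 - 1))" if "x \<in> {0<..}" for x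
      using assms by simp
  qed (use assms in auto)
  then show ?thesis by simp
qed

lemma powr_increment_lower:
  fixes G u v \<alpha> :: real
  assumes "1 \<le> \<alpha>" "0 < G" "G \<le> u" "u \<le> v"
  shows "G powr (\<alpha> - 1) * (v - u) \<le> v powr \<alpha> - u powr \<alpha>"
proof -
  have "G powr (\<alpha> - 1) * (v - u) \<le> v powr (\<alpha> - 1) * (v - u)"
    using assms by (intro mult_right_mono powr_mono2) auto
  also have "\<dots> \<le> v * v powr (\<alpha> - 1) - u * u powr (\<alpha> - 1)"
    using assms mult_left_mono[of "u powr (\<alpha> - 1)" "v powr (\<alpha> - 1)" u]
    by (simp add: powr_mono2 algebra_simps)
  also have "\<dots> = v powr \<alpha> - u powr \<alpha>"
    using assms by (simp add: powr_mult_base)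
  finally show ?thesis .
qed

lemma powr_increment_upper:
  fixes M u v \<alpha> :: real
  assumes "1 \<le> \<alpha>" "0 \<le> u" "u \<le> v" "v \<le> M"
  shows "v powr \<alpha> - u powr \<alpha> \<le> \<alpha> * M powr (\<alpha> - 1) * (v - u)"
proof -
  have "v powr \<alpha> - u powr \<alpha> \<le> \<alpha> * v powr (\<alpha> - 1) * (v - u)"
  proof (cases "u = 0")
    case True
    have "1 * (v * v powr (\<alpha> - 1)) \<le> \<alpha> * (v * v powr (\<alpha> - 1))"
      using assms by (intro mult_right_mono) auto
    moreover have "v powr \<alpha> = v * v powr (\<alpha> - 1)" using assms by (simp add: powr_mult_base)
    ultimately show ?thesis using True by (simp add: algebra_simps)
  next
    case False
    then have "\<alpha> * v powr (\<alpha> - 1) * (u - v) \<le> u powr \<alpha> - v powr \<alpha>"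
      using assms by (intro powr_tangent_convex) auto
    then show ?thesis by (simp add: algebra_simps)
  qed
  also have "\<dots> \<le> \<alpha> * M powr (\<alpha> - 1) * (v - u)"
    using assms by (intro mult_right_mono mult_left_mono powr_mono2) auto
  finally show ?thesis .
qed

lemma disp_diff_lower:
  fixes x y :: int and G \<alpha> :: real
  assumes "1 \<le> \<alpha>" "0 < G" "G \<le> \<bar>x\<bar>" "G \<le> \<bar>y\<bar>" "0 < x \<longleftrightarrow> 0 < y"
  shows "G powr (\<alpha> - 1) * \<bar>x - y\<bar> \<le> \<bar>disp \<alpha> x - disp \<alpha> y\<bar>"
proof -
  have *: "G powr (\<alpha> - 1) * \<bar>x - y\<bar> \<le> \<bar>disp \<alpha> x - disp \<alpha> y\<bar>"
    if "G \<le> \<bar>x\<bar>" "\<bar>x\<bar> \<le> \<bar>y\<bar>" "0 < x \<longleftrightarrow> 0 < y" for x y :: int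
  proof -
    have "real_of_int \<bar>x - y\<bar> = \<bar>real_of_int y\<bar> - \<bar>real_of_int x\<bar>"
      using that assms(2) by auto
    moreover have "G powr (\<alpha> - 1) * (\<bar>real_of_int y\<bar> - \<bar>real_of_int x\<bar>)
        \<le> \<bar>real_of_int y\<bar> powr \<alpha> - \<bar>real_of_int x\<bar> powr \<alpha>"
      using that assms by (intro powr_increment_lower) auto
    ultimately have "G powr (\<alpha> - 1) * \<bar>x - y\<bar> \<le> disp \<alpha> y - disp \<alpha> x"
      unfolding disp_def by simp
    then show ?thesis using abs_ge_minus_self[of "disp \<alpha> x - disp \<alpha> y"] by linarith
  qed
  show ?thesis
    using *[of x y] *[of y x] assms by (cases "\<bar>x\<bar> \<le> \<bar>y\<bar>") (auto simp: abs_minus_commute)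
qed

lemma disp_diff_upper:
  fixes s t :: int and M \<alpha> :: real
  assumes "1 \<le> \<alpha>" "\<bar>s\<bar> \<le> M" "\<bar>t\<bar> \<le> M"
  shows "\<bar>disp \<alpha> s - disp \<alpha> t\<bar> \<le> \<alpha> * M powr (\<alpha> - 1) * \<bar>s - t\<bar>"
proof -
  have *: "\<bar>disp \<alpha> s - disp \<alpha> t\<bar> \<le> \<alpha> * M powr (\<alpha> - 1) * \<bar>s - t\<bar>"
    if "\<bar>s\<bar> \<le> \<bar>t\<bar>" "\<bar>t\<bar> \<le> M" for s t :: int
  proof -
    have "\<bar>real_of_int t\<bar> powr \<alpha> - \<bar>real_of_int s\<bar> powr \<alpha>
        \<le> \<alpha> * M powr (\<alpha> - 1) * (\<bar>real_of_int t\<bar> - \<bar>real_of_int s\<bar>)"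
      using that assms by (intro powr_increment_upper) auto
    moreover have "\<bar>real_of_int s\<bar> powr \<alpha> \<le> \<bar>real_of_int t\<bar> powr \<alpha>"
      using that assms by (intro powr_mono2) auto
    moreover have "\<alpha> * M powr (\<alpha> - 1) * (\<bar>real_of_int t\<bar> - \<bar>real_of_int s\<bar>)
        \<le> \<alpha> * M powr (\<alpha> - 1) * real_of_int \<bar>s - t\<bar>"
      using assms by (intro mult_left_mono) auto
    ultimately show ?thesis unfolding disp_def by linarith
  qed
  show ?thesis
    using *[of s t] *[of t s] assms by (cases "\<bar>s\<bar> \<le> \<bar>t\<bar>") (auto simp: abs_minus_commute)
qed

section \<open>Second differences\<close>

lemma tangent_powr_minus_square:
  fixes \<alpha> R x y :: real
  assumes "1 < \<alpha>" "\<alpha> < 2" "0 < x" "x \<le> R" "0 < y" "y \<le> R"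
  defines "\<kappa> \<equiv> \<alpha> * (\<alpha> - 1) * R powr (\<alpha> - 2)"
  shows "(\<alpha> * x powr (\<alpha> - 1) - \<kappa> * x) * (y - x)
    \<le> (y powr \<alpha> - \<kappa> / 2 * y\<^sup>2) - (x powr \<alpha> - \<kappa> / 2 * x\<^sup>2)"
proof -
  have "(\<lambda>x. \<alpha> * x powr (\<alpha> - 1) - \<kappa> * x) x * (y - x)
    \<le> (\<lambda>x. x powr \<alpha> - \<kappa> / 2 * x\<^sup>2) y - (\<lambda>x. x powr \<alpha> - \<kappa> / 2 * x\<^sup>2) x"
  proof (rule f''_imp_f'[where C="{0<..R}" and f''="\<lambda>x. \<alpha> * ((\<alpha> - 1) * x powr (\<alpha> - 1 - 1)) - \<kappa>"])
    show "DERIV (\<lambda>x. x powr \<alpha> - \<kappa> / 2 * x\<^sup>2) z :> \<alpha> * z powr (\<alpha> - 1) - \<kappa> * z"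
      if "z \<in> {0<..R}" for z
      using that by (auto intro!: derivative_eq_intros has_real_derivative_powr)
    show "DERIV (\<lambda>x. \<alpha> * x powr (\<alpha> - 1) - \<kappa> * x) z :> \<alpha> * ((\<alpha> - 1) * z powr (\<alpha> - 1 - 1)) - \<kappa>"
      if "z \<in> {0<..R}" for z
      using that by (auto intro!: derivative_eq_intros has_real_derivative_powr)
    show "0 \<le> \<alpha> * ((\<alpha> - 1) * z powr (\<alpha> - 1 - 1)) - \<kappa>" if "z \<in> {0<..R}" for z
    proof -
      have "\<alpha> * (\<alpha> - 1) * R powr (\<alpha> - 2) \<le> \<alpha> * (\<alpha> - 1) * z powr (\<alpha> - 2)"
        using that assms by (intro mult_left_mono powr_mono2') auto
      then show ?thesis unfolding \<kappa>_def by (simp add: algebra_simps)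
    qed
  qed (use assms in auto)
  then show ?thesis by simp
qed

definition curvature_const :: "real \<Rightarrow> real" where
  "curvature_const \<alpha> = min (\<alpha> * (\<alpha> - 1)) (2 powr \<alpha> - 2)"

lemma curvature_const_pos: "1 < \<alpha> \<Longrightarrow> 0 < curvature_const \<alpha>"
  using powr_less_mono[of 1 \<alpha> 2] by (simp add: curvature_const_def)

lemma curvature_const_le_two: "1 < \<alpha> \<Longrightarrow> \<alpha> < 2 \<Longrightarrow> curvature_const \<alpha> \<le> 2"
  using mult_mono[of \<alpha> 2 "\<alpha> - 1" 1] by (simp add: curvature_const_def)

lemma curvature_const_powr_le:
  assumes "1 < \<alpha>" "\<alpha> < 2" "1 \<le> R"
  shows "curvature_const \<alpha> * R powr (\<alpha> - 2) \<le> curvature_const \<alpha>"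
  using assms curvature_const_pos[of \<alpha>] powr_mono2'[of "\<alpha> - 2" 1 R]
    mult_left_mono[of "R powr (\<alpha> - 2)" 1 "curvature_const \<alpha>"] by simp

lemma disp_second_diff_ge_interior:
  fixes t :: int and R \<alpha> :: real
  assumes "1 < \<alpha>" "\<alpha> < 2" "1 \<le> t" "t + 2 \<le> R"
  shows "\<alpha> * (\<alpha> - 1) * R powr (\<alpha> - 2) \<le> disp \<alpha> (t + 2) - 2 * disp \<alpha> (t + 1) + disp \<alpha> t"
proof -
  define \<kappa> where "\<kappa> = \<alpha> * (\<alpha> - 1) * R powr (\<alpha> - 2)"
  define x where "x = real_of_int t + 1"
  have x: "0 < x" "x \<le> R" "0 < x - 1" "x + 1 \<le> R" using assms by (auto simp: x_def)
  have "(\<alpha> * x powr (\<alpha> - 1) - \<kappa> * x) * ((x - 1) - x)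
      \<le> ((x - 1) powr \<alpha> - \<kappa> / 2 * (x - 1)\<^sup>2) - (x powr \<alpha> - \<kappa> / 2 * x\<^sup>2)"
    "(\<alpha> * x powr (\<alpha> - 1) - \<kappa> * x) * ((x + 1) - x)
      \<le> ((x + 1) powr \<alpha> - \<kappa> / 2 * (x + 1)\<^sup>2) - (x powr \<alpha> - \<kappa> / 2 * x\<^sup>2)"
    unfolding \<kappa>_def using assms x by (intro tangent_powr_minus_square; simp)+
  moreover have "disp \<alpha> (t + 2) - 2 * disp \<alpha> (t + 1) + disp \<alpha> t
      = (x + 1) powr \<alpha> - 2 * x powr \<alpha> + (x - 1) powr \<alpha>"
    using assms unfolding disp_def x_def by (simp add: add.commute)
  ultimately show ?thesis
    unfolding \<kappa>_def[symmetric] by (simp add: power2_eq_square algebra_simps add_divide_distrib)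
qed

lemma disp_second_diff_ge_nonneg:
  fixes t :: int and R \<alpha> :: real
  assumes "1 < \<alpha>" "\<alpha> < 2" "0 \<le> t" "t + 2 \<le> R"
  shows "curvature_const \<alpha> * R powr (\<alpha> - 2) \<le> disp \<alpha> (t + 2) - 2 * disp \<alpha> (t + 1) + disp \<alpha> t"
proof (cases "t = 0")
  case True
  then have "curvature_const \<alpha> * R powr (\<alpha> - 2) \<le> curvature_const \<alpha>"
    using assms by (intro curvature_const_powr_le) auto
  also have "\<dots> \<le> disp \<alpha> (t + 2) - 2 * disp \<alpha> (t + 1) + disp \<alpha> t"
    using True assms by (simp add: curvature_const_def disp_def)
  finally show ?thesis .
next
  case False
  then have "curvature_const \<alpha> * R powr (\<alpha> - 2) \<le> \<alpha> * (\<alpha> - 1) * R powr (\<alpha> - 2)"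
    unfolding curvature_const_def by (intro mult_right_mono) auto
  also have "\<dots> \<le> disp \<alpha> (t + 2) - 2 * disp \<alpha> (t + 1) + disp \<alpha> t"
    using assms False by (intro disp_second_diff_ge_interior) auto
  finally show ?thesis .
qed

text \<open>At \<open>t = -1\<close> the second difference is \<open>2\<close>; for \<open>t \<le> -2\<close> use the reflection \<open>t \<mapsto> -t - 2\<close>.\<close>
lemma disp_second_diff_ge:
  fixes t :: int and R \<alpha> :: real
  assumes "1 < \<alpha>" "\<alpha> < 2" "- R \<le> t" "t + 2 \<le> R"
  shows "curvature_const \<alpha> * R powr (\<alpha> - 2) \<le> disp \<alpha> (t + 2) - 2 * disp \<alpha> (t + 1) + disp \<alpha> t"
proof -
  consider "0 \<le> t" | "t = -1" | "t \<le> -2" by linarith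
  then show ?thesis
  proof cases
    case 1
    then show ?thesis using assms disp_second_diff_ge_nonneg by auto
  next
    case 2
    then have "curvature_const \<alpha> * R powr (\<alpha> - 2) \<le> curvature_const \<alpha>"
      using assms by (intro curvature_const_powr_le) auto
    also have "\<dots> \<le> disp \<alpha> (t + 2) - 2 * disp \<alpha> (t + 1) + disp \<alpha> t"
      using 2 curvature_const_le_two assms by (simp add: disp_def)
    finally show ?thesis .
  next
    case 3
    have "curvature_const \<alpha> * R powr (\<alpha> - 2)
        \<le> disp \<alpha> ((- t - 2) + 2) - 2 * disp \<alpha> ((- t - 2) + 1) + disp \<alpha> (- t - 2)"
      using assms 3 by (intro disp_second_diff_ge_nonneg) auto
    also have "\<dots> = disp \<alpha> (t + 2) - 2 * disp \<alpha> (t + 1) + disp \<alpha> t"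
      using disp_minus[of \<alpha> "t + 2"] disp_minus[of \<alpha> "t + 1"] disp_minus[of \<alpha> t]
      by (simp add: algebra_simps)
    finally show ?thesis .
  qed
qed

lemma int_increments_ge:
  fixes g :: "int \<Rightarrow> real"
  assumes step: "\<And>t. a \<le> t \<Longrightarrow> t < b \<Longrightarrow> \<kappa> \<le> g (t + 1) - g t"
    and "a \<le> x" "x \<le> y" "y \<le> b"
  shows "\<kappa> * of_int (y - x) \<le> g y - g x"
  using \<open>x \<le> y\<close> \<open>y \<le> b\<close>
proof (induction y rule: int_ge_induct)
  case (step y)
  then have "\<kappa> * of_int (y - x) \<le> g y - g x" "\<kappa> \<le> g (y + 1) - g y"
    using assms(1,2) by auto
  then show ?case by (simp add: algebra_simps)
qed simp

lemma disp_mixed_diff_ge_pos: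
  fixes x y e :: int and R \<alpha> :: real
  assumes "1 < \<alpha>" "\<alpha> < 2" "0 < e" "x \<le> y" "- R \<le> x" "y + e \<le> R"
  shows "curvature_const \<alpha> * R powr (\<alpha> - 2) * of_int e * of_int (y - x)
    \<le> (disp \<alpha> (y + e) - disp \<alpha> y) - (disp \<alpha> (x + e) - disp \<alpha> x)"
proof -
  define \<kappa> where "\<kappa> = curvature_const \<alpha> * R powr (\<alpha> - 2)"
  define D where "D t = disp \<alpha> (t + 1) - disp \<alpha> t" for t
  have "\<kappa> * of_int e \<le> (disp \<alpha> (t + 1 + e) - disp \<alpha> (t + 1)) - (disp \<alpha> (t + e) - disp \<alpha> t)"
    if "x \<le> t" "t < y" for t
  proof -
    have "\<kappa> * of_int (t + e - t) \<le> D (t + e) - D t"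
    proof (rule int_increments_ge)
      show "\<kappa> \<le> D (s + 1) - D s" if "t \<le> s" "s < t + e" for s
        using disp_second_diff_ge[of \<alpha> R s] assms \<open>x \<le> t\<close> \<open>t < y\<close> that
        by (simp add: \<kappa>_def D_def algebra_simps)
    qed (use assms in auto)
    then show ?thesis by (simp add: D_def algebra_simps)
  qed
  then have "\<kappa> * of_int e * of_int (y - x)
      \<le> (disp \<alpha> (y + e) - disp \<alpha> y) - (disp \<alpha> (x + e) - disp \<alpha> x)"
    using assms by (intro int_increments_ge[where a=x and b=y]) auto
  then show ?thesis by (simp add: \<kappa>_def)
qed

lemma disp_mixed_diff_ge:
  fixes x y e :: int and R \<alpha> :: real
  assumes "1 < \<alpha>" "\<alpha> < 2" "e \<noteq> 0" "x \<le> y"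
    and "\<bar>real_of_int x\<bar> \<le> R" "\<bar>real_of_int (x + e)\<bar> \<le> R"
    and "\<bar>real_of_int y\<bar> \<le> R" "\<bar>real_of_int (y + e)\<bar> \<le> R"
  shows "curvature_const \<alpha> * R powr (\<alpha> - 2) * \<bar>of_int e\<bar> * of_int (y - x)
    \<le> \<bar>(disp \<alpha> (y + e) - disp \<alpha> y) - (disp \<alpha> (x + e) - disp \<alpha> x)\<bar>"
proof (cases "0 < e")
  case True
  then have "curvature_const \<alpha> * R powr (\<alpha> - 2) * of_int e * of_int (y - x)
      \<le> (disp \<alpha> (y + e) - disp \<alpha> y) - (disp \<alpha> (x + e) - disp \<alpha> x)"
    using disp_mixed_diff_ge_pos[of \<alpha> e x y R] assms by simp
  then show ?thesis using True by (auto intro: order_trans[OF _ abs_ge_self])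
next
  case False
  then have "curvature_const \<alpha> * R powr (\<alpha> - 2) * of_int (- e) * of_int ((y + e) - (x + e))
      \<le> (disp \<alpha> ((y + e) + - e) - disp \<alpha> (y + e)) - (disp \<alpha> ((x + e) + - e) - disp \<alpha> (x + e))"
    using assms by (intro disp_mixed_diff_ge_pos) auto
  then show ?thesis using False by simp
qed

section \<open>Counting\<close>

lemma card_le_of_separated:
  fixes F :: "'a set" and g :: "'a \<Rightarrow> int" and \<phi> :: "'a \<Rightarrow> real"
  assumes "finite F" "inj_on g F" "0 < \<delta>" "0 \<le> L"
    and sep: "\<And>x y. x \<in> F \<Longrightarrow> y \<in> F \<Longrightarrow> g x < g y \<Longrightarrow> \<delta> * of_int (g y - g x) \<le> \<bar>\<phi> y - \<phi> x\<bar>"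
    and near: "\<And>x. x \<in> F \<Longrightarrow> \<bar>\<phi> x - c\<bar> \<le> L"
  shows "real (card F) \<le> 2 * L / \<delta> + 1"
proof (cases "F = {}")
  case True
  then show ?thesis using assms by simp
next
  case False
  define z0 where "z0 = Min (g ` F)"
  have "z0 \<in> g ` F" unfolding z0_def using \<open>finite F\<close> False by (intro Min_in) auto
  then obtain x0 where x0: "x0 \<in> F" "g x0 = z0" by auto
  define w where "w = \<lfloor>2 * L / \<delta>\<rfloor>"
  have "0 \<le> w" unfolding w_def using assms by simp
  have "g y \<le> z0 + w" if "y \<in> F" for y
  proof (cases "z0 < g y")
    case True
    have "\<delta> * of_int (g y - z0) \<le> \<bar>\<phi> y - \<phi> x0\<bar>" using sep x0 that True by auto
    also have "\<dots> \<le> 2 * L" using near[OF x0(1)] near[OF that] by linarith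
    finally have "of_int (g y - z0) \<le> 2 * L / \<delta>" using \<open>0 < \<delta>\<close> by (simp add: field_simps)
    then show ?thesis unfolding w_def by linarith
  next
    case False
    then show ?thesis using \<open>0 \<le> w\<close> by linarith
  qed
  moreover have "z0 \<le> g y" if "y \<in> F" for y
    unfolding z0_def using \<open>finite F\<close> that by simp
  ultimately have "g ` F \<subseteq> {z0..z0 + w}" by auto
  then have "card F \<le> card {z0..z0 + w}"
    using card_mono[of "{z0..z0 + w}" "g ` F"] card_image[OF \<open>inj_on g F\<close>] by simp
  then have "real (card F) \<le> of_int (w + 1)" using \<open>0 \<le> w\<close> by simp
  then show ?thesis unfolding w_def by linarith
qed

lemma powr_tangent_concave:
  fixes \<beta> u v :: real
  assumes "0 \<le> \<beta>" "\<beta> \<le> 1" "0 < u" "0 < v"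
  shows "u powr \<beta> \<le> v powr \<beta> + \<beta> * v powr (\<beta> - 1) * (u - v)"
proof -
  have "(\<lambda>x. - \<beta> * x powr (\<beta> - 1)) v * (u - v) \<le> (\<lambda>x. - (x powr \<beta>)) u - (\<lambda>x. - (x powr \<beta>)) v"
  proof (rule f''_imp_f'[where C="{0<..}" and f''="\<lambda>x. - \<beta> * ((\<beta> - 1) * x powr (\<beta> - 1 - 1))"])
    show "DERIV (\<lambda>x. - (x powr \<beta>)) x :> - \<beta> * x powr (\<beta> - 1)" if "x \<in> {0<..}" for x
      using that by (auto intro!: derivative_eq_intros has_real_derivative_powr)
    show "DERIV (\<lambda>x. - \<beta> * x powr (\<beta> - 1)) x :> - \<beta> * ((\<beta> - 1) * x powr (\<beta> - 1 - 1))"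
      if "x \<in> {0<..}" for x
      using that by (auto intro!: derivative_eq_intros has_real_derivative_powr)
    show "0 \<le> - \<beta> * ((\<beta> - 1) * x powr (\<beta> - 1 - 1))" if "x \<in> {0<..}" for x
      using assms by (intro mult_nonpos_nonpos mult_nonpos_nonneg) auto
  qed (use assms in auto)
  then show ?thesis by (simp add: algebra_simps)
qed

lemma harmonic_le_powr:
  fixes \<beta> :: real
  assumes "0 < \<beta>" "\<beta> \<le> 1"
  shows "(\<Sum>e\<in>{1..int n}. 1 / real_of_int e) \<le> real n powr \<beta> / \<beta>"
proof (induction n)
  case (Suc n)
  have "{1..int (Suc n)} = insert (int n + 1) {1..int n}" by auto
  then have "(\<Sum>e\<in>{1..int (Suc n)}. 1 / real_of_int e) = 1 / (real n + 1) + (\<Sum>e\<in>{1..int n}. 1 / real_of_int e)"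
    by simp
  also have "\<dots> \<le> 1 / (real n + 1) + real n powr \<beta> / \<beta>" using Suc by simp
  also have "\<dots> \<le> real (Suc n) powr \<beta> / \<beta>"
  proof (cases "n = 0")
    case False
    have "real n powr \<beta> \<le> (real n + 1) powr \<beta> + \<beta> * (real n + 1) powr (\<beta> - 1) * (real n - (real n + 1))"
      using False assms by (intro powr_tangent_concave) auto
    moreover have "1 / (real n + 1) \<le> (real n + 1) powr (\<beta> - 1)"
      using assms powr_mono[of "- 1" "\<beta> - 1" "real n + 1"] by (simp add: powr_minus divide_inverse)
    ultimately have "1 / (real n + 1) + real n powr \<beta> / \<beta>
        \<le> (real n + 1) powr (\<beta> - 1) + ((real n + 1) powr \<beta> - \<beta> * (real n + 1) powr (\<beta> - 1)) / \<beta>"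
      using assms by (intro add_mono divide_right_mono) auto
    also have "\<dots> = (real n + 1) powr \<beta> / \<beta>" using assms by (simp add: field_simps)
    finally show ?thesis by (simp add: add.commute)
  qed (use assms in simp)
  finally show ?case .
qed simp

definition pair_count_const :: "real \<Rightarrow> real \<Rightarrow> real" where
  "pair_count_const \<alpha> C0 = 4 + 8 * C0 / (curvature_const \<alpha> * (\<alpha> - 1))"

lemma card_mixed_diff_level_set:
  fixes e :: int and \<gamma> C0 \<alpha> :: real and R :: nat
  assumes "1 < \<alpha>" "\<alpha> < 2" "0 \<le> C0" "1 \<le> R" "e \<noteq> 0"
  shows "real (card {c. \<bar>c\<bar> \<le> int R \<and> \<bar>c + e\<bar> \<le> int R \<and> \<bar>(disp \<alpha> (c + e) - disp \<alpha> c) - \<gamma>\<bar> \<le> C0})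
    \<le> 2 * C0 / (curvature_const \<alpha> * real R powr (\<alpha> - 2) * \<bar>of_int e\<bar>) + 1"
proof (rule card_le_of_separated[where g=id])
  show "finite {c. \<bar>c\<bar> \<le> int R \<and> \<bar>c + e\<bar> \<le> int R \<and> \<bar>(disp \<alpha> (c + e) - disp \<alpha> c) - \<gamma>\<bar> \<le> C0}"
    by (rule finite_subset[of _ "{- int R..int R}"]) auto
  show "curvature_const \<alpha> * real R powr (\<alpha> - 2) * \<bar>of_int e\<bar> * of_int (id y - id x)
      \<le> \<bar>(disp \<alpha> (y + e) - disp \<alpha> y) - (disp \<alpha> (x + e) - disp \<alpha> x)\<bar>"
    if "x \<in> {c. \<bar>c\<bar> \<le> int R \<and> \<bar>c + e\<bar> \<le> int R \<and> \<bar>(disp \<alpha> (c + e) - disp \<alpha> c) - \<gamma>\<bar> \<le> C0}"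
      "y \<in> {c. \<bar>c\<bar> \<le> int R \<and> \<bar>c + e\<bar> \<le> int R \<and> \<bar>(disp \<alpha> (c + e) - disp \<alpha> c) - \<gamma>\<bar> \<le> C0}"
      "id x < id y" for x y
    unfolding id_apply using that assms by (intro disp_mixed_diff_ge) auto
qed (use assms curvature_const_pos[of \<alpha>] in auto)

lemma sum_level_set_bounds_le:
  fixes C0 \<alpha> :: real and R :: nat
  assumes \<alpha>: "1 < \<alpha>" "\<alpha> < 2" and "0 \<le> C0" "1 \<le> R"
  defines "\<kappa> \<equiv> curvature_const \<alpha> * real R powr (\<alpha> - 2)"
  shows "(\<Sum>e\<in>{- 2 * int R..2 * int R} - {0}. 2 * C0 / (\<kappa> * \<bar>of_int e\<bar>) + 1)
    \<le> pair_count_const \<alpha> C0 * R"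
proof -
  have "0 < \<kappa>" unfolding \<kappa>_def using curvature_const_pos[OF \<alpha>(1)] \<open>1 \<le> R\<close> by simp
  define E1 where "E1 = {1..2 * int R}"
  have split: "{- 2 * int R..2 * int R} - {0} = E1 \<union> uminus ` E1"
    unfolding E1_def by (auto simp: image_iff)
  have "(\<Sum>e\<in>uminus ` E1. 2 * C0 / (\<kappa> * \<bar>of_int e\<bar>) + 1) = (\<Sum>e\<in>E1. 2 * C0 / (\<kappa> * \<bar>of_int e\<bar>) + 1)"
    by (subst sum.reindex) (auto simp: inj_on_def)
  moreover have "(\<Sum>e\<in>E1. 2 * C0 / (\<kappa> * \<bar>of_int e\<bar>) + 1) = (\<Sum>e\<in>E1. 2 * C0 / \<kappa> * (1 / of_int e) + 1)"
    by (intro sum.cong) (auto simp: E1_def)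
  ultimately have "(\<Sum>e\<in>{- 2 * int R..2 * int R} - {0}. 2 * C0 / (\<kappa> * \<bar>of_int e\<bar>) + 1)
      = 2 * (\<Sum>e\<in>E1. 2 * C0 / \<kappa> * (1 / of_int e) + 1)"
    unfolding split by (subst sum.union_disjoint) (auto simp: E1_def)
  also have "\<dots> = 4 * C0 / \<kappa> * (\<Sum>e\<in>E1. 1 / of_int e) + 4 * real R"
    by (simp add: sum.distrib sum_distrib_left E1_def)
  also have "\<dots> \<le> 4 * C0 / \<kappa> * (2 * real R powr (\<alpha> - 1) / (\<alpha> - 1)) + 4 * real R"
  proof -
    have "(\<Sum>e\<in>E1. 1 / of_int e) \<le> real (2 * R) powr (\<alpha> - 1) / (\<alpha> - 1)"
      using harmonic_le_powr[of "\<alpha> - 1" "2 * R"] \<alpha> unfolding E1_def by simp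
    also have "\<dots> \<le> 2 * real R powr (\<alpha> - 1) / (\<alpha> - 1)"
      using \<alpha> powr_mono[of "\<alpha> - 1" 1 2]
      by (intro divide_right_mono) (auto simp: powr_mult intro: mult_right_mono)
    finally show ?thesis
      using \<open>0 < \<kappa>\<close> \<open>0 \<le> C0\<close> by (intro add_right_mono mult_left_mono) auto
  qed
  also have "\<dots> = pair_count_const \<alpha> C0 * R"
  proof -
    have "real R powr (\<alpha> - 1) = real R powr (\<alpha> - 2) * real R"
      using powr_mult_base[of "real R" "\<alpha> - 2"] by (simp add: mult.commute)
    then show ?thesis
      unfolding \<kappa>_def pair_count_const_def
      using curvature_const_pos[OF \<alpha>(1)] \<alpha> \<open>1 \<le> R\<close> by (simp add: field_simps)
  qed
  finally show ?thesis .
qed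

text \<open>Sorting the pairs by \<open>e = b - c\<close>, for each \<open>e \<noteq> 0\<close> the admissible \<open>c\<close> form a level set of
  \<open>c \<mapsto> disp (c + e) - disp c\<close>, which grows at rate \<open>\<kappa> \<bar>e\<bar>\<close>; summing over \<open>e\<close> costs a harmonic sum.\<close>
lemma card_resonant_pairs:
  fixes a :: int and \<mu> C0 \<alpha> :: real and R :: nat
  assumes "1 < \<alpha>" "\<alpha> < 2" "0 \<le> C0" "1 \<le> R"
  shows "real (card {(b, c). b \<noteq> c \<and> \<bar>b\<bar> \<le> int R \<and> \<bar>c\<bar> \<le> int R \<and>
      \<bar>disp \<alpha> a + disp \<alpha> b - disp \<alpha> c - disp \<alpha> (a + b - c) + \<mu>\<bar> \<le> C0})
    \<le> pair_count_const \<alpha> C0 * R"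
    (is "real (card ?Q) \<le> _")
proof -
  define E where "E = {- 2 * int R..2 * int R} - {0}"
  define A where "A e = {c. \<bar>c\<bar> \<le> int R \<and> \<bar>c + e\<bar> \<le> int R \<and>
      \<bar>(disp \<alpha> (c + e) - disp \<alpha> c) - (disp \<alpha> (a + e) - disp \<alpha> a - \<mu>)\<bar> \<le> C0}" for e
  have "finite (A e)" for e
    by (rule finite_subset[of _ "{- int R..int R}"]) (auto simp: A_def)
  have "?Q \<subseteq> (\<Union>e\<in>E. (\<lambda>c. (c + e, c)) ` A e)"
  proof
    fix q assume "q \<in> ?Q"
    then obtain b c where q: "q = (b, c)" "b \<noteq> c" "\<bar>b\<bar> \<le> int R" "\<bar>c\<bar> \<le> int R"
      "\<bar>disp \<alpha> a + disp \<alpha> b - disp \<alpha> c - disp \<alpha> (a + b - c) + \<mu>\<bar> \<le> C0" by auto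
    then have "b - c \<in> E" "c \<in> A (b - c)"
      unfolding E_def A_def by (auto simp: diff_diff_eq2 add_diff_eq)
    then show "q \<in> (\<Union>e\<in>E. (\<lambda>c. (c + e, c)) ` A e)" using q(1) by force
  qed
  then have "card ?Q \<le> (\<Sum>e\<in>E. card (A e))"
    using \<open>\<And>e. finite (A e)\<close> unfolding E_def
    by (intro order_trans[OF card_mono order_trans[OF card_UN_le sum_mono]]) (auto intro: card_image_le)
  then have "real (card ?Q) \<le> (\<Sum>e\<in>E. real (card (A e)))"
    by (simp only: of_nat_sum[symmetric] of_nat_le_iff)
  also have "\<dots> \<le> (\<Sum>e\<in>E. 2 * C0 / (curvature_const \<alpha> * real R powr (\<alpha> - 2) * \<bar>of_int e\<bar>) + 1)"
    unfolding A_def E_def using assms by (intro sum_mono card_mixed_diff_level_set) auto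
  also have "\<dots> \<le> pair_count_const \<alpha> C0 * R"
    unfolding E_def using assms by (rule sum_level_set_bounds_le)
  finally show ?thesis .
qed

text \<open>A large frequency moves \<open>disp\<close> at rate at least \<open>G\<^sup>\<alpha>\<^sup>-\<^sup>1\<close>, a small one at rate at most
  \<open>\<alpha> M\<^sup>\<alpha>\<^sup>-\<^sup>1\<close>; when the two move by the same amount the large one wins.\<close>
lemma disp_large_small_separation:
  fixes x x' y y' :: int and G M \<alpha> e1 e2 :: real
  assumes "1 \<le> \<alpha>" "0 < G" "1 \<le> M" "2 * \<alpha> * M powr (\<alpha> - 1) \<le> G powr (\<alpha> - 1)"
    and "\<bar>e1\<bar> = 1" "\<bar>e2\<bar> = 1"
    and "G \<le> \<bar>x\<bar>" "G \<le> \<bar>x'\<bar>" "0 < x \<longleftrightarrow> 0 < x'" "\<bar>y\<bar> \<le> M" "\<bar>y'\<bar> \<le> M"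
    and "\<bar>y' - y\<bar> = \<bar>x' - x\<bar>"
  shows "\<bar>x' - x\<bar> \<le> \<bar>e1 * (disp \<alpha> x' - disp \<alpha> x) + e2 * (disp \<alpha> y' - disp \<alpha> y)\<bar>"
proof -
  define \<Delta> where "\<Delta> = real_of_int \<bar>x' - x\<bar>"
  have "0 \<le> \<Delta>" unfolding \<Delta>_def by simp
  have "1 \<le> \<alpha> * M powr (\<alpha> - 1)"
    using assms ge_one_powr_ge_zero[of M "\<alpha> - 1"] mult_mono[of 1 \<alpha> 1 "M powr (\<alpha> - 1)"] by simp
  then have "1 * \<Delta> \<le> \<alpha> * M powr (\<alpha> - 1) * \<Delta>"
    "2 * \<alpha> * M powr (\<alpha> - 1) * \<Delta> \<le> G powr (\<alpha> - 1) * \<Delta>"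
    using assms(4) \<open>0 \<le> \<Delta>\<close> by (intro mult_right_mono; simp)+
  then have "\<Delta> \<le> G powr (\<alpha> - 1) * \<Delta> - \<alpha> * M powr (\<alpha> - 1) * \<Delta>" by simp
  also have "\<dots> \<le> \<bar>disp \<alpha> x' - disp \<alpha> x\<bar> - \<bar>disp \<alpha> y' - disp \<alpha> y\<bar>"
    using disp_diff_lower[of \<alpha> G x' x] disp_diff_upper[of \<alpha> y' M y] assms
    unfolding \<Delta>_def by simp
  also have "\<dots> \<le> \<bar>e1 * (disp \<alpha> x' - disp \<alpha> x) + e2 * (disp \<alpha> y' - disp \<alpha> y)\<bar>"
    using assms(5,6) abs_triangle_ineq4[of "e1 * (disp \<alpha> x' - disp \<alpha> x) + e2 * (disp \<alpha> y' - disp \<alpha> y)"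
        "e2 * (disp \<alpha> y' - disp \<alpha> y)"]
    by (simp add: abs_mult)
  finally show ?thesis unfolding \<Delta>_def by simp
qed

lemma card_le_large_small_fibre:
  fixes F :: "'a set" and x1 x2 :: "'a \<Rightarrow> int" and \<rho> :: "'a \<Rightarrow> real" and G M \<alpha> C0 e1 e2 :: real
  assumes "1 \<le> \<alpha>" "0 < G" "1 \<le> M" "2 * \<alpha> * M powr (\<alpha> - 1) \<le> G powr (\<alpha> - 1)"
    and "\<bar>e1\<bar> = 1" "\<bar>e2\<bar> = 1" "finite F" "0 \<le> C0"
    and fibre: "\<And>u w. u \<in> F \<Longrightarrow> w \<in> F \<Longrightarrow> \<bar>x2 u - x2 w\<bar> = \<bar>x1 u - x1 w\<bar> \<and>
      (x1 u = x1 w \<longrightarrow> u = w) \<and> \<rho> u = \<rho> w \<and> (0 < x1 u \<longleftrightarrow> 0 < x1 w)"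
    and point: "\<And>u. u \<in> F \<Longrightarrow> G \<le> \<bar>x1 u\<bar> \<and> \<bar>x2 u\<bar> \<le> M \<and>
      \<bar>e1 * disp \<alpha> (x1 u) + e2 * disp \<alpha> (x2 u) + \<rho> u\<bar> \<le> C0"
  shows "real (card F) \<le> 2 * C0 + 1"
proof -
  define \<phi> where "\<phi> u = e1 * disp \<alpha> (x1 u) + e2 * disp \<alpha> (x2 u) + \<rho> u" for u
  have "real (card F) \<le> 2 * C0 / 1 + 1"
  proof (rule card_le_of_separated[where g=x1 and \<phi>=\<phi> and c=0])
    show "inj_on x1 F" using fibre unfolding inj_on_def by blast
    show "1 * of_int (x1 y - x1 u) \<le> \<bar>\<phi> y - \<phi> u\<bar>" if "u \<in> F" "y \<in> F" "x1 u < x1 y" for u y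
    proof -
      have "\<phi> y - \<phi> u = e1 * (disp \<alpha> (x1 y) - disp \<alpha> (x1 u)) + e2 * (disp \<alpha> (x2 y) - disp \<alpha> (x2 u))"
        using fibre[OF that(2,1)] unfolding \<phi>_def by (simp add: algebra_simps)
      moreover have "\<bar>x1 y - x1 u\<bar> \<le> \<bar>e1 * (disp \<alpha> (x1 y) - disp \<alpha> (x1 u)) + e2 * (disp \<alpha> (x2 y) - disp \<alpha> (x2 u))\<bar>"
        using fibre[OF that(2,1)] point[OF that(1)] point[OF that(2)]
        by (intro disp_large_small_separation[OF assms(1-6)]) simp_all
      ultimately show ?thesis using that by simp
    qed
    show "\<bar>\<phi> u - 0\<bar> \<le> C0" if "u \<in> F" for u
      using point[OF that] unfolding \<phi>_def by simp
  qed (use \<open>finite F\<close> \<open>0 \<le> C0\<close> in simp_all)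
  then show ?thesis by simp
qed

lemma card_le_large_small_fibres:
  fixes T :: "'a set" and I :: "int set" and x1 x2 idx :: "'a \<Rightarrow> int" and \<rho> :: "'a \<Rightarrow> real"
    and G M \<alpha> C0 e1 e2 :: real
  assumes "1 \<le> \<alpha>" "0 < G" "1 \<le> M" "2 * \<alpha> * M powr (\<alpha> - 1) \<le> G powr (\<alpha> - 1)"
    and "finite T" "finite I" "0 \<le> C0" "\<bar>e1\<bar> = 1" "\<bar>e2\<bar> = 1"
    and fibre: "\<And>u w. u \<in> T \<Longrightarrow> w \<in> T \<Longrightarrow> idx u = idx w \<Longrightarrow>
      \<bar>x2 u - x2 w\<bar> = \<bar>x1 u - x1 w\<bar> \<and> (x1 u = x1 w \<longrightarrow> u = w) \<and> \<rho> u = \<rho> w"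
    and point: "\<And>u. u \<in> T \<Longrightarrow> G \<le> \<bar>x1 u\<bar> \<and> \<bar>x2 u\<bar> \<le> M \<and> idx u \<in> I \<and>
      \<bar>e1 * disp \<alpha> (x1 u) + e2 * disp \<alpha> (x2 u) + \<rho> u\<bar> \<le> C0"
  shows "real (card T) \<le> real (card I) * (4 * C0 + 2)"
proof -
  define F where "F z s = {u \<in> T. idx u = z \<and> (0 < x1 u \<longleftrightarrow> s)}" for z s
  have card_F: "real (card (F z s)) \<le> 2 * C0 + 1" for z s
  proof (rule card_le_large_small_fibre[OF assms(1-4,8,9) _ \<open>0 \<le> C0\<close>,
        where ?x1.0=x1 and ?x2.0=x2 and \<rho>=\<rho>])
    show "finite (F z s)" using \<open>finite T\<close> unfolding F_def by simp
    show "\<bar>x2 u - x2 w\<bar> = \<bar>x1 u - x1 w\<bar> \<and> (x1 u = x1 w \<longrightarrow> u = w) \<and> \<rho> u = \<rho> w \<and> (0 < x1 u \<longleftrightarrow> 0 < x1 w)"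
      if "u \<in> F z s" "w \<in> F z s" for u w
      using fibre[of u w] that unfolding F_def by simp
    show "G \<le> \<bar>x1 u\<bar> \<and> \<bar>x2 u\<bar> \<le> M \<and> \<bar>e1 * disp \<alpha> (x1 u) + e2 * disp \<alpha> (x2 u) + \<rho> u\<bar> \<le> C0"
      if "u \<in> F z s" for u
      using point[of u] that unfolding F_def by simp
  qed
  have "T \<subseteq> (\<Union>z\<in>I. F z True \<union> F z False)" using point unfolding F_def by auto
  then have "card T \<le> (\<Sum>z\<in>I. card (F z True \<union> F z False))"
    using assms(5,6) by (intro order_trans[OF card_mono card_UN_le]) (auto simp: F_def)
  also have "\<dots> \<le> (\<Sum>z\<in>I. card (F z True) + card (F z False))"
    by (intro sum_mono card_Un_le)
  finally have "real (card T) \<le> (\<Sum>z\<in>I. real (card (F z True)) + real (card (F z False)))"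
    by (simp only: of_nat_sum[symmetric] of_nat_add[symmetric] of_nat_le_iff)
  also have "\<dots> \<le> (\<Sum>z\<in>I. (2 * C0 + 1) + (2 * C0 + 1))"
    by (intro sum_mono add_mono card_F)
  finally show ?thesis by simp
qed

section \<open>Resonant quadruples\<close>

type_synonym quad = "int \<times> int \<times> int \<times> int"

text \<open>Coordinates are indexed cyclically by \<open>l mod 4\<close>, so that \<open>k, k\<^sub>1, k\<^sub>2, k\<^sub>3\<close> are the coordinates
  \<open>0, 1, 2, 3\<close> and every shift of the index is again a coordinate.\<close>
definition coord :: "quad \<Rightarrow> nat \<Rightarrow> int" where
  "coord = (\<lambda>(k, k1, k2, k3) l. [k, k1, k2, k3] ! (l mod 4))"

lemma coord_simps [simp]: "coord (k, k1, k2, k3) l = [k, k1, k2, k3] ! (l mod 4)"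
  by (simp add: coord_def)

lemma coord_mod: "coord q (l mod 4) = coord q l"
  by (cases q) simp

text \<open>Only for explicit instances: as a rewrite rule it applies to its own right-hand side.\<close>
lemma coord_add_mod: "coord q (i + s) = coord q (i mod 4 + s)"
  by (cases q) (simp add: mod_add_left_eq)

lemma mod_4_cases:
  fixes i :: nat
  obtains "i mod 4 = 0" | "i mod 4 = 1" | "i mod 4 = 2" | "i mod 4 = 3"
  using mod_less_divisor[of 4 i] by linarith

lemma coord_eqI:
  assumes "\<And>s. s < 4 \<Longrightarrow> coord q (i + s) = coord q' (i + s)"
  shows "q = q'"
proof -
  have "coord q (i mod 4 + s) = coord q' (i mod 4 + s)" if "s < 4" for s
    using assms[OF that] coord_add_mod[of q i s] coord_add_mod[of q' i s] by simp
  from this[of 0] this[of 1] this[of 2] this[of 3] show ?thesis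
    by (cases i rule: mod_4_cases; cases q; cases q'; simp)
qed

lemma sum_lessThan_4: "(\<Sum>l<4. g (l :: nat)) = g 0 + g 1 + g 2 + (g 3 :: 'a :: comm_monoid_add)"
  by (simp add: numeral_eq_Suc add.assoc)

lemma alternating_sum_coord_shift:
  fixes f :: "int \<Rightarrow> 'a :: comm_ring_1"
  shows "(\<Sum>l<4. (- 1) ^ l * f (coord q l))
    = (- 1) ^ i * (f (coord q i) - f (coord q (i + 1)) + f (coord q (i + 2)) - f (coord q (i + 3)))"
proof -
  have "(- 1 :: 'a) ^ i = (- 1) ^ (4 * (i div 4) + i mod 4)" by simp
  also have "\<dots> = (- 1) ^ (i mod 4)" by (simp only: power_add power_mult) simp
  finally have sign: "(- 1 :: 'a) ^ i = (- 1) ^ (i mod 4)" .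
  have "coord q (i + s) = coord q (i mod 4 + s)" for s
    by (rule coord_add_mod)
  from sign this[of 0] this[of 1] this[of 2] this[of 3] show ?thesis
    unfolding sum_lessThan_4 by (cases i rule: mod_4_cases; cases q; simp add: algebra_simps)
qed

text \<open>The defining conditions of \<open>Sset\<close> apart from the size bounds, in a form invariant under
  cyclic shifts: given the linear relation, \<open>k\<^sub>2 \<notin> {k\<^sub>1, k\<^sub>3}\<close> says exactly that cyclically
  adjacent coordinates differ.\<close>
definition resonant :: "real \<Rightarrow> real \<Rightarrow> real \<Rightarrow> quad \<Rightarrow> bool" where
  "resonant \<alpha> C0 m q \<longleftrightarrow>
     (\<Sum>l<4. (- 1) ^ l * coord q l) = 0 \<and> (\<forall>l. coord q (Suc l) \<noteq> coord q l) \<and>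
     \<bar>(\<Sum>l<4. (- 1) ^ l * disp \<alpha> (coord q l)) + m\<bar> \<le> C0"

lemma Sset_resonant:
  assumes "q \<in> Sset \<alpha> C0 m N N1 N2 N3"
  shows "resonant \<alpha> C0 m q"
proof -
  obtain k k1 k2 k3 where q: "q = (k, k1, k2, k3)" by (cases q)
  have "coord q (Suc l) \<noteq> coord q l" for l
    using assms coord_add_mod[of q l 1] unfolding q Sset_def
    by (cases l rule: mod_4_cases) auto
  moreover have "\<bar>disp \<alpha> k - disp \<alpha> k1 + disp \<alpha> k2 - disp \<alpha> k3 + m\<bar>
      = \<bar>disp \<alpha> k1 - disp \<alpha> k2 + disp \<alpha> k3 - disp \<alpha> k - m\<bar>"
    by (subst abs_minus_cancel[symmetric]) (simp add: algebra_simps)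
  ultimately show ?thesis
    using assms unfolding q Sset_def resonant_def sum_lessThan_4 disp_def[symmetric] by auto
qed

lemma resonant_shift:
  assumes "resonant \<alpha> C0 m q"
  shows "coord q (i + 3) = coord q i + coord q (i + 2) - coord q (i + 1)"
    and "\<bar>disp \<alpha> (coord q i) + disp \<alpha> (coord q (i + 2)) - disp \<alpha> (coord q (i + 1))
      - disp \<alpha> (coord q (i + 3)) + (- 1) ^ i * m\<bar> \<le> C0"
proof -
  have "(- 1) ^ i * (coord q i - coord q (i + 1) + coord q (i + 2) - coord q (i + 3)) = 0"
    using assms alternating_sum_coord_shift[of "\<lambda>x. x" q i] by (simp add: resonant_def)
  then show "coord q (i + 3) = coord q i + coord q (i + 2) - coord q (i + 1)" by simp
  define X where "X = disp \<alpha> (coord q i) + disp \<alpha> (coord q (i + 2)) - disp \<alpha> (coord q (i + 1))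
      - disp \<alpha> (coord q (i + 3))"
  have "\<bar>(- 1) ^ i * X + m\<bar> \<le> C0"
    using assms alternating_sum_coord_shift[of "disp \<alpha>" q i]
    unfolding resonant_def X_def by (simp add: algebra_simps)
  moreover have "X + (- 1) ^ i * m = (- 1) ^ i * ((- 1) ^ i * X + m)"
    by (simp add: algebra_simps flip: power_mult_distrib)
  then have "\<bar>X + (- 1) ^ i * m\<bar> = \<bar>(- 1) ^ i * X + m\<bar>"
    by (simp add: abs_mult)
  ultimately show "\<bar>X + (- 1) ^ i * m\<bar> \<le> C0" by simp
qed

lemma resonant_coord_eqI:
  assumes "resonant \<alpha> C0 m q" "resonant \<alpha> C0 m q'"
    and "coord q i = coord q' i" "coord q (i + 1) = coord q' (i + 1)" "coord q (i + 2) = coord q' (i + 2)"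
  shows "q = q'"
proof (rule coord_eqI[of q i q'])
  fix s :: nat assume "s < 4"
  then consider "s = 0" | "s = 1" | "s = 2" | "s = 3" by linarith
  then show "coord q (i + s) = coord q' (i + s)"
    using assms resonant_shift(1)[OF assms(1), of i] resonant_shift(1)[OF assms(2), of i] by cases simp_all
qed

text \<open>Fixing coordinate \<open>i\<close>, the neighbours \<open>i + 2\<close> and \<open>i + 1\<close> determine the quadruple and form a
  pair counted by \<open>card_resonant_pairs\<close>.\<close>
lemma card_slice_bounded:
  fixes R :: nat
  assumes "1 < \<alpha>" "\<alpha> < 2" "0 \<le> C0" "1 \<le> R"
    and T: "\<And>q. q \<in> T \<Longrightarrow> resonant \<alpha> C0 m q \<and> coord q i = v \<and> (\<forall>l<4. \<bar>coord q l\<bar> \<le> int R)"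
  shows "real (card T) \<le> pair_count_const \<alpha> C0 * R"
proof -
  define Q where "Q = {(b, c). b \<noteq> c \<and> \<bar>b\<bar> \<le> int R \<and> \<bar>c\<bar> \<le> int R \<and>
      \<bar>disp \<alpha> v + disp \<alpha> b - disp \<alpha> c - disp \<alpha> (v + b - c) + (- 1) ^ i * m\<bar> \<le> C0}"
  define f where "f q = (coord q (i + 2), coord q (i + 1))" for q
  have "f ` T \<subseteq> Q"
  proof (rule image_subsetI)
    fix q assume q: "q \<in> T"
    have "\<bar>coord q (l mod 4)\<bar> \<le> int R" for l
      using T[OF q] by simp
    moreover have "coord q (Suc (i + 1)) \<noteq> coord q (i + 1)"
      using T[OF q] unfolding resonant_def by blast
    ultimately show "f q \<in> Q"
      using resonant_shift[of \<alpha> C0 m q i] T[OF q] unfolding Q_def f_def coord_mod by simp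
  qed
  moreover have "inj_on f T"
  proof (rule inj_onI)
    fix q q' assume "q \<in> T" "q' \<in> T" "f q = f q'"
    then show "q = q'"
      using T[of q] T[of q'] by (intro resonant_coord_eqI[where i=i and \<alpha>=\<alpha> and ?C0.0=C0 and m=m])
        (simp_all add: f_def)
  qed
  moreover have "finite Q"
    by (rule finite_subset[of _ "{- int R..int R} \<times> {- int R..int R}"]) (auto simp: Q_def)
  ultimately have "card T \<le> card Q"
    by (blast intro: card_inj_on_le)
  then show ?thesis
    using card_resonant_pairs[OF assms(1-4), of v "(- 1) ^ i * m"] unfolding Q_def by linarith
qed

lemma distinct_4_eq_lessThan:
  assumes "distinct [a, b, c, i]" "a < 4" "b < 4" "c < 4" "i < (4 :: nat)"
  shows "{a, b, c, i} = {..<4}"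
  using assms by (intro card_subset_eq) (auto simp: card_insert_if)

lemma sum_lessThan_4_distinct:
  assumes "distinct [a, b, c, i]" "a < 4" "b < 4" "c < 4" "i < (4 :: nat)"
  shows "(\<Sum>l<4. g l) = g a + g b + g c + (g i :: 'a :: comm_monoid_add)"
  using assms by (simp flip: distinct_4_eq_lessThan[OF assms] add: add.assoc)

lemma resonant_fibre:
  assumes "resonant \<alpha> C0 m u" "resonant \<alpha> C0 m w"
    and roles: "distinct [a, b, c, i]" "a < 4" "b < 4" "c < 4" "i < 4"
    and "coord u c = coord w c" "coord u i = coord w i"
  shows "\<bar>coord u b - coord w b\<bar> = \<bar>coord u a - coord w a\<bar>"
    and "coord u a = coord w a \<Longrightarrow> u = w"
proof -
  have rel: "(- 1) ^ a * coord q a + (- 1) ^ b * coord q b + (- 1) ^ c * coord q c + (- 1) ^ i * coord q i = 0"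
    if "resonant \<alpha> C0 m q" for q
    using that unfolding resonant_def sum_lessThan_4_distinct[OF roles] by blast
  have diff: "(- 1) ^ a * (coord u a - coord w a) = - ((- 1) ^ b * (coord u b - coord w b))"
    using rel[OF assms(1)] rel[OF assms(2)] assms(8,9) by (simp add: algebra_simps)
  then have "\<bar>(- 1) ^ a * (coord u a - coord w a)\<bar> = \<bar>(- 1) ^ b * (coord u b - coord w b)\<bar>"
    by simp
  then show "\<bar>coord u b - coord w b\<bar> = \<bar>coord u a - coord w a\<bar>"
    by (simp add: abs_mult power_abs)
  assume "coord u a = coord w a"
  then have "coord u l = coord w l" if "l \<in> {a, b, c, i}" for l
    using that diff assms by auto
  then show "u = w"
    using distinct_4_eq_lessThan[OF roles] by (intro coord_eqI[where i=0]) auto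
qed

lemma card_slice_large:
  fixes G M :: real
  assumes "1 \<le> \<alpha>" "0 < G" "1 \<le> M" "2 * \<alpha> * M powr (\<alpha> - 1) \<le> G powr (\<alpha> - 1)"
    and "finite T" "finite I" "0 \<le> C0"
    and roles: "distinct [a, b, c, i]" "a < 4" "b < 4" "c < 4" "i < 4"
    and T: "\<And>q. q \<in> T \<Longrightarrow> resonant \<alpha> C0 m q \<and> coord q i = v \<and>
      G \<le> \<bar>coord q a\<bar> \<and> \<bar>coord q b\<bar> \<le> M \<and> coord q c \<in> I"
  shows "real (card T) \<le> real (card I) * (4 * C0 + 2)"
proof (rule card_le_large_small_fibres[OF assms(1-7), where ?x1.0="\<lambda>q. coord q a" and ?x2.0="\<lambda>q. coord q b"
      and idx="\<lambda>q. coord q c" and ?e1.0="(- 1) ^ a" and ?e2.0="(- 1) ^ b"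
      and \<rho>="\<lambda>q. (- 1) ^ c * disp \<alpha> (coord q c) + (- 1) ^ i * disp \<alpha> (coord q i) + m"])
  show "\<bar>coord u b - coord w b\<bar> = \<bar>coord u a - coord w a\<bar> \<and> (coord u a = coord w a \<longrightarrow> u = w) \<and>
      (- 1) ^ c * disp \<alpha> (coord u c) + (- 1) ^ i * disp \<alpha> (coord u i) + m
      = (- 1) ^ c * disp \<alpha> (coord w c) + (- 1) ^ i * disp \<alpha> (coord w i) + m"
    if "u \<in> T" "w \<in> T" "coord u c = coord w c" for u w
  proof -
    have "resonant \<alpha> C0 m u" "resonant \<alpha> C0 m w" "coord u i = coord w i"
      using T[OF that(1)] T[OF that(2)] by auto
    then show ?thesis
      using resonant_fibre[OF _ _ roles, of \<alpha> C0 m u w] that(3) by auto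
  qed
  show "G \<le> \<bar>coord u a\<bar> \<and> \<bar>coord u b\<bar> \<le> M \<and> coord u c \<in> I \<and>
      \<bar>(- 1) ^ a * disp \<alpha> (coord u a) + (- 1) ^ b * disp \<alpha> (coord u b)
        + ((- 1) ^ c * disp \<alpha> (coord u c) + (- 1) ^ i * disp \<alpha> (coord u i) + m)\<bar> \<le> C0"
    if "u \<in> T" for u
  proof -
    have "resonant \<alpha> C0 m u" "G \<le> \<bar>coord u a\<bar>" "\<bar>coord u b\<bar> \<le> M" "coord u c \<in> I"
      using T[OF that] by auto
    then show ?thesis unfolding resonant_def sum_lessThan_4_distinct[OF roles] by (simp add: add.assoc)
  qed
qed simp_all

text \<open>\<open>0\<close> and \<open>j\<close> index the large coordinates: \<open>a\<close> is a large one and \<open>b\<close> a small one other than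
  the fixed coordinate \<open>i\<close>, and \<open>c\<close> indexes the fibres.\<close>
lemma exists_large_small_roles:
  assumes "i < 4" "j \<in> {1, 2, 3 :: nat}"
  shows "\<exists>a<4. \<exists>b<4. \<exists>c<4. distinct [a, b, c, i] \<and> a \<in> {0, j} \<and> b \<notin> {0, j}"
proof -
  have "\<forall>i<4. \<forall>j\<in>{1, 2, 3 :: nat}. \<exists>a<4. \<exists>b<4. \<exists>c<4. distinct [a, b, c, i] \<and> a \<in> {0, j} \<and> b \<notin> {0, j}"
    by (simp add: numeral_eq_Suc Ex_less_Suc All_less_Suc)
  then show ?thesis using assms by blast
qed

lemma card_slice_two_large:
  fixes \<alpha> C0 m G :: real and M :: nat and I :: "nat \<Rightarrow> int set"
  assumes "1 \<le> \<alpha>" "0 < G" "1 \<le> M" "2 * \<alpha> * real M powr (\<alpha> - 1) \<le> G powr (\<alpha> - 1)"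
    and "finite T" "0 \<le> C0" "i < 4" "j \<in> {1, 2, 3}"
    and I: "\<And>l. finite (I l)" "\<And>l. card (I l) \<le> 4 * M"
    and T: "\<And>q. q \<in> T \<Longrightarrow> resonant \<alpha> C0 m q \<and> coord q i = v \<and>
      (\<forall>l<4. coord q l \<in> I l \<and> (l \<in> {0, j} \<longrightarrow> G \<le> \<bar>coord q l\<bar>) \<and> (l \<notin> {0, j} \<longrightarrow> \<bar>coord q l\<bar> \<le> M))"
  shows "real (card T) \<le> 4 * M * (4 * C0 + 2)"
proof -
  obtain a b c where roles: "a < 4" "b < 4" "c < 4" "distinct [a, b, c, i]" "a \<in> {0, j}" "b \<notin> {0, j}"
    using exists_large_small_roles[OF \<open>i < 4\<close> \<open>j \<in> {1, 2, 3}\<close>] by blast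
  have "real (card T) \<le> real (card (I c)) * (4 * C0 + 2)"
  proof (rule card_slice_large[where a=a and b=b and c=c and i=i and v=v])
    show "resonant \<alpha> C0 m q \<and> coord q i = v \<and> G \<le> \<bar>coord q a\<bar> \<and> \<bar>coord q b\<bar> \<le> real M \<and> coord q c \<in> I c"
      if "q \<in> T" for q
      using T[OF that] roles by (auto simp del: insert_iff)
  qed (use assms roles in auto)
  also have "\<dots> \<le> 4 * M * (4 * C0 + 2)"
    using I(2)[of c] \<open>0 \<le> C0\<close> by (intro mult_right_mono) auto
  finally show ?thesis .
qed

section \<open>The sets \<open>B\<^sub>\<Gamma>\<close>\<close>

text \<open>Above \<open>\<Gamma> = threshold \<alpha> * N\<^sub>m\<^sub>e\<^sub>d\<close>, the lower bound \<open>G = \<Gamma> - 2 N\<^sub>m\<^sub>e\<^sub>d\<close> for the two large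
  frequencies satisfies \<open>2 \<alpha> N\<^sub>m\<^sub>e\<^sub>d\<^sup>\<alpha>\<^sup>-\<^sup>1 \<le> G\<^sup>\<alpha>\<^sup>-\<^sup>1\<close>, as needed in \<open>disp_large_small_separation\<close>.\<close>
definition threshold :: "real \<Rightarrow> nat" where
  "threshold \<alpha> = nat \<lceil>(2 * \<alpha>) powr (1 / (\<alpha> - 1))\<rceil> + 3"

definition slice_const :: "real \<Rightarrow> real \<Rightarrow> real" where
  "slice_const \<alpha> C0 = max (pair_count_const \<alpha> C0 * (threshold \<alpha> + 2)) (4 * (4 * C0 + 2))"

lemma large_small_condition_of_threshold:
  fixes G :: real and M :: nat
  assumes "1 < \<alpha>" "(threshold \<alpha> - 2) * M \<le> G"
  shows "2 * \<alpha> * real M powr (\<alpha> - 1) \<le> G powr (\<alpha> - 1)"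
proof -
  define \<theta> where "\<theta> = (2 * \<alpha>) powr (1 / (\<alpha> - 1))"
  have "\<theta> powr (\<alpha> - 1) = 2 * \<alpha>"
    unfolding \<theta>_def powr_powr using assms(1) by simp
  moreover have "\<theta> * M \<le> G"
  proof -
    have "\<theta> \<le> real (threshold \<alpha> - 2)" unfolding threshold_def \<theta>_def by linarith
    then have "\<theta> * M \<le> real (threshold \<alpha> - 2) * M" by (intro mult_right_mono) auto
    then show ?thesis using assms(2) by simp
  qed
  ultimately show ?thesis
    using assms(1) powr_mono2[of "\<alpha> - 1" "\<theta> * M" G] by (simp add: \<theta>_def powr_mult)
qed

lemma slice_const_ge: "0 \<le> C0 \<Longrightarrow> 8 \<le> slice_const \<alpha> C0"
  by (simp add: slice_const_def)

lemma card_annulus_le: "card {z :: int. y - 2 * real M < \<bar>z\<bar> \<and> \<bar>z\<bar> \<le> y} \<le> 4 * M"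
proof -
  define f where "f = \<lfloor>y\<rfloor>"
  have "{z :: int. y - 2 * real M < \<bar>z\<bar> \<and> \<bar>z\<bar> \<le> y} \<subseteq> {f - 2 * int M + 1..f} \<union> {- f..- f + 2 * int M - 1}"
  proof
    fix z :: int assume z: "z \<in> {z :: int. y - 2 * real M < \<bar>z\<bar> \<and> \<bar>z\<bar> \<le> y}"
    have upper: "\<bar>z\<bar> \<le> f" using z unfolding f_def by (simp add: le_floor_iff)
    have "real_of_int f \<le> y" unfolding f_def by simp
    then have "real_of_int (f - 2 * int M) < real_of_int \<bar>z\<bar>" using z by auto
    then have "f - 2 * int M < \<bar>z\<bar>" by (simp only: of_int_less_iff)
    with upper show "z \<in> {f - 2 * int M + 1..f} \<union> {- f..- f + 2 * int M - 1}"
      by (cases "0 \<le> z") auto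
  qed
  then have "card {z :: int. y - 2 * real M < \<bar>z\<bar> \<and> \<bar>z\<bar> \<le> y}
      \<le> card {f - 2 * int M + 1..f} + card {- f..- f + 2 * int M - 1}"
    by (intro order_trans[OF card_mono card_Un_le]) auto
  then show ?thesis by simp
qed

lemma finite_annulus: "finite {z :: int. x < \<bar>z\<bar> \<and> \<bar>z\<bar> \<le> (y :: real)}"
  by (rule finite_subset[of _ "{- \<lceil>y\<rceil>..\<lceil>y\<rceil>}"]) (auto, linarith+)

lemma finite_Bset: "finite (Bset \<alpha> C0 m N N1 N2 N3 j \<Gamma>)"
proof (rule finite_subset)
  show "Bset \<alpha> C0 m N N1 N2 N3 j \<Gamma>
      \<subseteq> {- int N..int N} \<times> {- int N1..int N1} \<times> {- int N2..int N2} \<times> {- int N3..int N3}"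
    by (auto simp: Bset_def Sset_def abs_le_iff)
qed simp

lemma sel3_le_nmed3:
  assumes "sel3 j N1 N2 N3 = nmax3 N1 N2 N3" "j \<in> {1, 2, 3}" "l \<in> {1, 2, 3}" "l \<noteq> j"
  shows "sel3 l N1 N2 N3 \<le> nmed3 N1 N2 N3"
  using assms unfolding sel3_def nmed3_def nmax3_def nmin3_def by (auto split: if_splits simp: max_def min_def)

lemma min_le_nmed3: "min N1 N3 \<le> nmed3 N1 N2 N3"
  by (auto simp: nmed3_def nmax3_def nmin3_def max_def min_def)

lemma Bset_coord:
  fixes \<alpha> C0 m \<Gamma> :: real
  assumes q: "q \<in> Bset \<alpha> C0 m N N1 N2 N3 j \<Gamma>"
    and j: "j \<in> {1, 2, 3}" "sel3 j N1 N2 N3 = nmax3 N1 N2 N3"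
  defines "M \<equiv> nmed3 N1 N2 N3"
  shows "resonant \<alpha> C0 m q"
    and "\<And>l. l \<in> {1, 2, 3} \<Longrightarrow> \<bar>coord q l\<bar> \<le> int (sel3 l N1 N2 N3)"
    and small: "\<And>l. l < 4 \<Longrightarrow> l \<notin> {0, j} \<Longrightarrow> \<bar>coord q l\<bar> \<le> int M"
    and "\<Gamma> - 2 * real M < \<bar>real_of_int (coord q j)\<bar>" "\<bar>real_of_int (coord q j)\<bar> \<le> \<Gamma>"
    and "\<Gamma> < \<bar>real_of_int (coord q 0)\<bar>" "\<bar>real_of_int (coord q 0)\<bar> \<le> \<Gamma> + 2 * real M"
proof -
  obtain k k1 k2 k3 where q_eq: "q = (k, k1, k2, k3)" by (cases q)
  have S: "q \<in> Sset \<alpha> C0 m N N1 N2 N3"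
    and "\<bar>real_of_int (coord q j)\<bar> \<le> \<Gamma>" "\<Gamma> < \<bar>real_of_int (coord q 0)\<bar>"
    using q j(1) unfolding q_eq Bset_def by (auto simp: sel3_def)
  then show "resonant \<alpha> C0 m q"
    "\<bar>real_of_int (coord q j)\<bar> \<le> \<Gamma>" "\<Gamma> < \<bar>real_of_int (coord q 0)\<bar>"
    by (simp_all add: Sset_resonant)
  show bound: "\<bar>coord q l\<bar> \<le> int (sel3 l N1 N2 N3)" if "l \<in> {1, 2, 3}" for l
    using S that unfolding q_eq Sset_def by (auto simp: sel3_def)
  show small: "\<bar>coord q l\<bar> \<le> int M" if "l < 4" "l \<notin> {0, j}" for l
  proof -
    have "l \<in> {1, 2, 3}" using that by auto
    then show ?thesis
      using bound[of l] sel3_le_nmed3[OF j(2,1), of l] that unfolding M_def by force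
  qed
  have "k = k1 - k2 + k3" using S unfolding q_eq Sset_def by simp
  then have "\<bar>coord q 0\<bar> \<le> \<bar>coord q j\<bar> + 2 * int M"
    using j(1) small[of 1] small[of 2] small[of 3] unfolding q_eq by auto
  then have "\<bar>real_of_int (coord q 0)\<bar> \<le> \<bar>real_of_int (coord q j)\<bar> + 2 * real M"
    by linarith
  then show "\<Gamma> - 2 * real M < \<bar>real_of_int (coord q j)\<bar>"
    "\<bar>real_of_int (coord q 0)\<bar> \<le> \<Gamma> + 2 * real M"
    using \<open>\<bar>real_of_int (coord q j)\<bar> \<le> \<Gamma>\<close> \<open>\<Gamma> < \<bar>real_of_int (coord q 0)\<bar>\<close> by linarith+
qed

lemma card_Bset_slice_below_threshold:
  fixes \<alpha> C0 m \<Gamma> :: real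
  assumes \<alpha>: "1 < \<alpha>" "\<alpha> < 2" and "0 \<le> C0" and j: "j \<in> {1, 2, 3}" "sel3 j N1 N2 N3 = nmax3 N1 N2 N3"
    and "1 \<le> nmed3 N1 N2 N3" "\<Gamma> < threshold \<alpha> * nmed3 N1 N2 N3"
  shows "real (card {q \<in> Bset \<alpha> C0 m N N1 N2 N3 j \<Gamma>. coord q i = v})
    \<le> pair_count_const \<alpha> C0 * (threshold \<alpha> + 2) * nmed3 N1 N2 N3"
proof -
  define M where "M = nmed3 N1 N2 N3"
  define K where "K = threshold \<alpha>"
  define R where "R = (K + 2) * M"
  note B = Bset_coord[OF _ j, folded M_def]
  have bounded: "\<bar>coord q l\<bar> \<le> int R" if q: "q \<in> Bset \<alpha> C0 m N N1 N2 N3 j \<Gamma>" and "l < 4" for q l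
  proof -
    have "real_of_int \<bar>coord q j\<bar> \<le> real_of_int (int K * int M)"
      "real_of_int \<bar>coord q 0\<bar> \<le> real_of_int (int K * int M + 2 * int M)"
      using B(5-7)[OF q] assms(7) unfolding K_def M_def by auto
    then have "\<bar>coord q j\<bar> \<le> int K * int M" "\<bar>coord q 0\<bar> \<le> int K * int M + 2 * int M"
      by (simp_all only: of_int_le_iff)
    moreover have "l = 0 \<or> l = j \<or> l \<notin> {0, j}" by auto
    ultimately show ?thesis
      using B(3)[OF q, of l] \<open>l < 4\<close> unfolding R_def by (auto simp: algebra_simps)
  qed
  have "real (card {q \<in> Bset \<alpha> C0 m N N1 N2 N3 j \<Gamma>. coord q i = v}) \<le> pair_count_const \<alpha> C0 * R"
  proof (rule card_slice_bounded[OF \<alpha> \<open>0 \<le> C0\<close>, where m=m and i=i and v=v])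
    show "1 \<le> R" using assms(6) unfolding R_def M_def by simp
    show "resonant \<alpha> C0 m q \<and> coord q i = v \<and> (\<forall>l<4. \<bar>coord q l\<bar> \<le> int R)"
      if "q \<in> {q \<in> Bset \<alpha> C0 m N N1 N2 N3 j \<Gamma>. coord q i = v}" for q
      using that B(1)[of q] bounded[of q] by blast
  qed
  then show ?thesis unfolding R_def K_def M_def by (simp add: algebra_simps)
qed

lemma card_Bset_slice_above_threshold:
  fixes \<alpha> C0 m \<Gamma> :: real
  assumes \<alpha>: "1 < \<alpha>" "\<alpha> < 2" and "0 \<le> C0" and j: "j \<in> {1, 2, 3}" "sel3 j N1 N2 N3 = nmax3 N1 N2 N3"
    and "1 \<le> nmed3 N1 N2 N3" "threshold \<alpha> * nmed3 N1 N2 N3 \<le> \<Gamma>" "i < 4"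
  shows "real (card {q \<in> Bset \<alpha> C0 m N N1 N2 N3 j \<Gamma>. coord q i = v}) \<le> 4 * nmed3 N1 N2 N3 * (4 * C0 + 2)"
proof -
  define M where "M = nmed3 N1 N2 N3"
  define K where "K = threshold \<alpha>"
  define G where "G = \<Gamma> - 2 * M"
  note B = Bset_coord[OF _ j, folded M_def]
  have "3 \<le> K" unfolding K_def threshold_def by simp
  then have "real (K - 2) * M \<le> G" using assms(7) unfolding G_def K_def M_def by (simp add: of_nat_diff algebra_simps)
  moreover have "real M \<le> real (K - 2) * M"
    using \<open>3 \<le> K\<close> mult_right_mono[of 1 "real K - 2" "real M"] by (simp add: of_nat_diff)
  ultimately have "M \<le> G" "2 * \<alpha> * real M powr (\<alpha> - 1) \<le> G powr (\<alpha> - 1)"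
    using \<alpha> by (auto simp: K_def intro: large_small_condition_of_threshold)
  define I where "I l = (if l = 0 then {z. \<Gamma> < \<bar>z\<bar> \<and> \<bar>z\<bar> \<le> \<Gamma> + 2 * real M}
    else if l = j then {z. \<Gamma> - 2 * real M < \<bar>z\<bar> \<and> \<bar>z\<bar> \<le> \<Gamma>} else {- int M..int M})" for l
  show ?thesis
    unfolding M_def[symmetric]
  proof (rule card_slice_two_large[where I=I and v=v, OF _ _ _ _ _ \<open>0 \<le> C0\<close> \<open>i < 4\<close> j(1)])
    show "finite (I l)" for l
      unfolding I_def by (simp add: finite_annulus)
    show "card (I l) \<le> 4 * M" for l
      using card_annulus_le[of "\<Gamma> + 2 * real M" M] card_annulus_le[of \<Gamma> M] assms(6)
      unfolding I_def M_def by (simp add: nat_le_iff)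
    show "resonant \<alpha> C0 m q \<and> coord q i = v \<and> (\<forall>l<4. coord q l \<in> I l \<and>
        (l \<in> {0, j} \<longrightarrow> G \<le> \<bar>coord q l\<bar>) \<and> (l \<notin> {0, j} \<longrightarrow> \<bar>coord q l\<bar> \<le> M))"
      if "q \<in> {q \<in> Bset \<alpha> C0 m N N1 N2 N3 j \<Gamma>. coord q i = v}" for q
    proof -
      have q: "q \<in> Bset \<alpha> C0 m N N1 N2 N3 j \<Gamma>" "coord q i = v" using that by auto
      have "coord q l \<in> I l \<and> (l \<in> {0, j} \<longrightarrow> G \<le> \<bar>coord q l\<bar>) \<and> (l \<notin> {0, j} \<longrightarrow> \<bar>coord q l\<bar> \<le> M)"
        if "l < 4" for l
        using B(3-7)[OF q(1)] B(3)[OF q(1) that] j(1) unfolding I_def G_def by (auto simp: abs_le_iff)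
      then show ?thesis using B(1)[OF q(1)] q(2) by blast
    qed
  qed (use \<open>1 < \<alpha>\<close> \<open>M \<le> G\<close> \<open>2 * \<alpha> * real M powr (\<alpha> - 1) \<le> G powr (\<alpha> - 1)\<close> assms(6) finite_Bset
      in \<open>simp_all add: M_def\<close>)
qed

lemma card_Bset_slice:
  fixes \<alpha> C0 m \<Gamma> :: real
  assumes "1 < \<alpha>" "\<alpha> < 2" "0 \<le> C0"
    and N: "1 \<le> N1" "1 \<le> N2" "1 \<le> N3" and j: "j \<in> {1, 2, 3}" "sel3 j N1 N2 N3 = nmax3 N1 N2 N3"
    and "i < 4"
  shows "real (card {q \<in> Bset \<alpha> C0 m N N1 N2 N3 j \<Gamma>. coord q i = v}) \<le> slice_const \<alpha> C0 * nmed3 N1 N2 N3"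
proof -
  have "1 \<le> nmed3 N1 N2 N3" using N unfolding nmed3_def nmax3_def nmin3_def by (auto simp: max_def min_def)
  then have "pair_count_const \<alpha> C0 * (threshold \<alpha> + 2) * nmed3 N1 N2 N3 \<le> slice_const \<alpha> C0 * nmed3 N1 N2 N3"
    "4 * nmed3 N1 N2 N3 * (4 * C0 + 2) \<le> slice_const \<alpha> C0 * nmed3 N1 N2 N3"
    unfolding slice_const_def by (auto intro: mult_right_mono simp: mult.commute mult.left_commute)
  then show ?thesis
    using card_Bset_slice_below_threshold[OF assms(1-3) j \<open>1 \<le> nmed3 N1 N2 N3\<close>, of \<Gamma> m N i v]
      card_Bset_slice_above_threshold[OF assms(1-3) j \<open>1 \<le> nmed3 N1 N2 N3\<close> _ \<open>i < 4\<close>, of \<Gamma> m N v]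
    by (cases "\<Gamma> < threshold \<alpha> * nmed3 N1 N2 N3") auto
qed

lemma card_fix_coord:
  fixes B :: "quad set"
  shows "card {(k1, k2, k3). (k, k1, k2, k3) \<in> B} = card {q \<in> B. coord q 0 = k}"
    and "card {(k, k2, k3). (k, k1, k2, k3) \<in> B} = card {q \<in> B. coord q 1 = k1}"
    and "card {(k, k1, k3). (k, k1, k2, k3) \<in> B} = card {q \<in> B. coord q 2 = k2}"
    and "card {(k, k1, k2). (k, k1, k2, k3) \<in> B} = card {q \<in> B. coord q 3 = k3}"
  by (rule bij_betw_same_card[of "\<lambda>(k1, k2, k3). (k, k1, k2, k3)"] bij_betw_same_card[of "\<lambda>(k, k2, k3). (k, k1, k2, k3)"]
      bij_betw_same_card[of "\<lambda>(k, k1, k3). (k, k1, k2, k3)"] bij_betw_same_card[of "\<lambda>(k, k1, k2). (k, k1, k2, k3)"],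
      rule bij_betwI'; force)+

lemma card_Bset_le:
  fixes \<alpha> C0 m \<Gamma> :: real
  assumes "1 < \<alpha>" "\<alpha> < 2" "0 \<le> C0"
    and N: "1 \<le> N1" "1 \<le> N2" "1 \<le> N3" and j: "j \<in> {1, 2, 3}" "sel3 j N1 N2 N3 = nmax3 N1 N2 N3"
  shows "real (card (Bset \<alpha> C0 m N N1 N2 N3 j \<Gamma>))
    \<le> 3 * slice_const \<alpha> C0 * nmin3 N1 N2 N3 * nmed3 N1 N2 N3"
proof -
  define B where "B = Bset \<alpha> C0 m N N1 N2 N3 j \<Gamma>"
  define L where "L = nmin3 N1 N2 N3"
  have "\<exists>i\<in>{1, 2, 3}. sel3 i N1 N2 N3 = L"
    unfolding L_def by (auto simp: sel3_def nmin3_def min_def)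
  then obtain i where i: "i \<in> {1, 2, 3}" "sel3 i N1 N2 N3 = L" by blast
  have "1 \<le> L" using N unfolding L_def nmin3_def by simp
  have "B \<subseteq> (\<Union>v\<in>{- int L..int L}. {q \<in> B. coord q i = v})"
    using Bset_coord(2)[OF _ j, of _ \<alpha> C0 m N \<Gamma> i] i unfolding B_def by fastforce
  then have "card B \<le> (\<Sum>v\<in>{- int L..int L}. card {q \<in> B. coord q i = v})"
    using finite_Bset unfolding B_def by (intro order_trans[OF card_mono card_UN_le]) auto
  then have "real (card B) \<le> (\<Sum>v\<in>{- int L..int L}. real (card {q \<in> B. coord q i = v}))"
    by (simp only: of_nat_sum[symmetric] of_nat_le_iff)
  also have "\<dots> \<le> (\<Sum>v\<in>{- int L..int L}. slice_const \<alpha> C0 * nmed3 N1 N2 N3)"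
    using i(1) unfolding B_def by (intro sum_mono card_Bset_slice) (use assms in auto)
  also have "\<dots> = (2 * L + 1) * (slice_const \<alpha> C0 * nmed3 N1 N2 N3)" by simp
  also have "\<dots> \<le> (3 * L) * (slice_const \<alpha> C0 * nmed3 N1 N2 N3)"
    using \<open>1 \<le> L\<close> slice_const_ge[OF \<open>0 \<le> C0\<close>, of \<alpha>] by (intro mult_right_mono) auto
  finally show ?thesis unfolding B_def L_def by (simp add: algebra_simps)
qed

lemma card_Bset_fix_k_k2:
  fixes \<alpha> C0 m \<Gamma> :: real
  shows "card {(k1, k3). (k, k1, k2, k3) \<in> Bset \<alpha> C0 m N N1 N2 N3 j \<Gamma>} \<le> 2 * nmed3 N1 N2 N3 + 1"
proof -
  define S where "S = {(k1, k3). (k, k1, k2, k3) \<in> Bset \<alpha> C0 m N N1 N2 N3 j \<Gamma>}"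
  have S: "k = a - k2 + b \<and> \<bar>a\<bar> \<le> int N1 \<and> \<bar>b\<bar> \<le> int N3" if "(a, b) \<in> S" for a b
    using that unfolding S_def Bset_def Sset_def by auto
  have "inj_on fst S" "inj_on snd S"
    by (auto simp: inj_on_def dest!: S)
  moreover have "fst ` S \<subseteq> {- int N1..int N1}" "snd ` S \<subseteq> {- int N3..int N3}"
    by (auto dest!: S)
  ultimately have "card S \<le> 2 * N1 + 1" "card S \<le> 2 * N3 + 1"
    using card_mono[OF _ \<open>fst ` S \<subseteq> _\<close>] card_mono[OF _ \<open>snd ` S \<subseteq> _\<close>] by (simp_all add: card_image)
  then show ?thesis
    using min_le_nmed3[of N1 N3 N2] unfolding S_def by linarith
qed

lemma card_Bset_fix_k1_k3:
  fixes \<alpha> C0 m \<Gamma> :: real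
  assumes "1 \<le> N2" "j \<in> {1, 2, 3}" "sel3 j N1 N2 N3 = nmax3 N1 N2 N3"
  shows "card {(k, k2). (k, k1, k2, k3) \<in> Bset \<alpha> C0 m N N1 N2 N3 j \<Gamma>} \<le> 4 * nmed3 N1 N2 N3"
proof -
  define M where "M = nmed3 N1 N2 N3"
  define S where "S = {(k, k2). (k, k1, k2, k3) \<in> Bset \<alpha> C0 m N N1 N2 N3 j \<Gamma>}"
  have "inj_on snd S"
    by (auto simp: inj_on_def S_def Bset_def Sset_def)
  moreover have "card (snd ` S) \<le> 4 * M"
  proof (cases "j = 2")
    case True
    have "snd ` S \<subseteq> {z. \<Gamma> - 2 * real M < \<bar>real_of_int z\<bar> \<and> \<bar>real_of_int z\<bar> \<le> \<Gamma>}"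
      using Bset_coord(4,5)[OF _ assms(2,3)] True unfolding S_def M_def by fastforce
    then have "card (snd ` S) \<le> card {z. \<Gamma> - 2 * real M < \<bar>real_of_int z\<bar> \<and> \<bar>real_of_int z\<bar> \<le> \<Gamma>}"
      by (rule card_mono[OF finite_annulus])
    then show ?thesis using card_annulus_le[of \<Gamma> M] by linarith
  next
    case False
    then have "N2 \<le> M" using sel3_le_nmed3[OF assms(3,2), of 2] unfolding M_def by (simp add: sel3_def)
    have "snd ` S \<subseteq> {- int N2..int N2}"
      by (auto simp: S_def Bset_def Sset_def abs_le_iff)
    then have "card (snd ` S) \<le> card {- int N2..int N2}" by (intro card_mono) auto
    then have "card (snd ` S) \<le> 2 * N2 + 1" by simp
    then show ?thesis using \<open>N2 \<le> M\<close> \<open>1 \<le> N2\<close> by linarith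
  qed
  ultimately show ?thesis unfolding S_def M_def by (simp add: card_image)
qed

lemma card_Bset_bounds:
  fixes \<alpha> C0 m \<Gamma> :: real and N N1 N2 N3 j :: nat
  assumes "1 < \<alpha>" "\<alpha> < 2" "0 \<le> C0"
    and hyps: "1 \<le> N1" "1 \<le> N2" "1 \<le> N3" "j \<in> {1, 2, 3}" "sel3 j N1 N2 N3 = nmax3 N1 N2 N3"
  defines "B \<equiv> Bset \<alpha> C0 m N N1 N2 N3 j \<Gamma>" and "C \<equiv> 3 * slice_const \<alpha> C0"
    and "M \<equiv> real (nmed3 N1 N2 N3)"
  shows "real (card B) \<le> C * real (nmin3 N1 N2 N3) * M"
    and "real (card {(k1, k2, k3). (k, k1, k2, k3) \<in> B}) \<le> C * M"
    and "real (card {(k, k2, k3). (k, k1, k2, k3) \<in> B}) \<le> C * M"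
    and "real (card {(k, k1, k3). (k, k1, k2, k3) \<in> B}) \<le> C * M"
    and "real (card {(k, k1, k2). (k, k1, k2, k3) \<in> B}) \<le> C * M"
    and "real (card {(k1, k3). (k, k1, k2, k3) \<in> B}) \<le> C * M"
    and "real (card {(k, k2). (k, k1, k2, k3) \<in> B}) \<le> C * M"
proof -
  have "1 \<le> M" using hyps unfolding M_def nmed3_def nmax3_def nmin3_def by (auto simp: max_def min_def)
  have "8 \<le> slice_const \<alpha> C0" using \<open>0 \<le> C0\<close> by (rule slice_const_ge)
  then have C: "slice_const \<alpha> C0 * M \<le> C * M" "24 * M \<le> C * M"
    using \<open>1 \<le> M\<close> unfolding C_def by (intro mult_right_mono; simp)+
  have slice: "real (card {q \<in> B. coord q i = v}) \<le> C * M" if "i < 4" for i v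
    using C(1) unfolding B_def M_def by (rule order_trans[OF card_Bset_slice[OF assms(1-3) hyps that]])
  show "real (card B) \<le> C * real (nmin3 N1 N2 N3) * M"
    using card_Bset_le[OF assms(1-3) hyps] unfolding B_def C_def M_def by simp
  show "real (card {(k1, k2, k3). (k, k1, k2, k3) \<in> B}) \<le> C * M"
    and "real (card {(k, k2, k3). (k, k1, k2, k3) \<in> B}) \<le> C * M"
    and "real (card {(k, k1, k3). (k, k1, k2, k3) \<in> B}) \<le> C * M"
    and "real (card {(k, k1, k2). (k, k1, k2, k3) \<in> B}) \<le> C * M"
    unfolding card_fix_coord by (simp_all add: slice)
  have "real (card {(k1, k3). (k, k1, k2, k3) \<in> B}) \<le> real (2 * nmed3 N1 N2 N3 + 1)"
    unfolding B_def by (intro of_nat_mono card_Bset_fix_k_k2)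
  then have "real (card {(k1, k3). (k, k1, k2, k3) \<in> B}) \<le> 2 * M + 1"
    unfolding M_def by simp
  then show "real (card {(k1, k3). (k, k1, k2, k3) \<in> B}) \<le> C * M"
    using C(2) \<open>1 \<le> M\<close> by linarith
  have "real (card {(k, k2). (k, k1, k2, k3) \<in> B}) \<le> real (4 * nmed3 N1 N2 N3)"
    unfolding B_def by (intro of_nat_mono card_Bset_fix_k1_k3[OF hyps(2,4,5)])
  then have "real (card {(k, k2). (k, k1, k2, k3) \<in> B}) \<le> 4 * M"
    unfolding M_def by simp
  then show "real (card {(k, k2). (k, k1, k2, k3) \<in> B}) \<le> C * M"
    using C(2) \<open>1 \<le> M\<close> by linarith
qed

theorem lemma2p11:
  fixes \<alpha> C0 :: real
  assumes "1 < \<alpha>" and "\<alpha> < 2" and "0 < C0"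
  shows "\<exists>C::real. \<forall>N N1 N2 N3 (m::real) (\<Gamma>::real) (j::nat).
     dyadic N \<and> dyadic N1 \<and> dyadic N2 \<and> dyadic N3 \<and>
     1 \<le> N1 \<and> N1 \<le> N \<and> 1 \<le> N2 \<and> N2 \<le> N \<and> 1 \<le> N3 \<and> N3 \<le> N \<and>
     0 < \<Gamma> \<and> j \<in> {1, 2, 3} \<and> sel3 j N1 N2 N3 = nmax3 N1 N2 N3 \<longrightarrow>
     (let B = Bset \<alpha> C0 m N N1 N2 N3 j \<Gamma>; Nmin = real (nmin3 N1 N2 N3);
          Nmed = real (nmed3 N1 N2 N3) in
      real (card B) \<le> C * Nmin * Nmed \<and>
      (\<forall>k. real (card {(k1, k2, k3). (k, k1, k2, k3) \<in> B}) \<le> C * Nmed) \<and>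
      (\<forall>k1. real (card {(k, k2, k3). (k, k1, k2, k3) \<in> B}) \<le> C * Nmed) \<and>
      (\<forall>k2. real (card {(k, k1, k3). (k, k1, k2, k3) \<in> B}) \<le> C * Nmed) \<and>
      (\<forall>k3. real (card {(k, k1, k2). (k, k1, k2, k3) \<in> B}) \<le> C * Nmed) \<and>
      (\<forall>k k2. real (card {(k1, k3). (k, k1, k2, k3) \<in> B}) \<le> C * Nmed) \<and>
      (\<forall>k1 k3. real (card {(k, k2). (k, k1, k2, k3) \<in> B}) \<le> C * Nmed))"
proof -
  have "0 \<le> C0" using assms(3) by simp
  note bounds = card_Bset_bounds[OF assms(1,2) this]
  show ?thesis
    by (intro exI[of _ "3 * slice_const \<alpha> C0"] allI impI) (auto simp: Let_def bounds)
qed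

end
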